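(* Let $X\times G\xrightarrow{\alpha}X$ be a Bourbaki-proper continuous right action of a locally compact Hausdorff group on a Hausdorff space, let $F\subseteq X$ be closed and let $H\trianglelefteq G$ be a closed normal subgroup, with quotient map $\pi\colon X\to X/H$. If $\alpha$ is $F$-proper, then $\pi(F)$ is closed in $X/H$ and the induced action of $G/H$ on $X/H$ is $\pi(F)$-proper.
   Context: For $A,B\subseteq X$ set $\langle A:B\rangle_\alpha:=\{g\in G: Bg\cap A\neq\emptyset\}$ and write $A\perp B$ if it is relatively compact in $G$. The action is Bourbaki-proper if for all $x,x'\in X$ there are neighborhoods $V_x\ni x$, $V_{x'}\ni x'$ with $V_{x'}\perp V_x$. For closed $F$, the action is $F$-proper if for every $x\in X$ there are neighborhoods $V_x\ni x$ and $V_F\supseteq F$ with $V_F\perp V_x$ (analogously for the induced action on $X/H$). *)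

theory Defs
  imports "HOL-Analysis.Analysis" "HOL-Algebra.Coset"
begin

definition topological_group :: "('g, 'b) monoid_scheme \<Rightarrow> 'g topology \<Rightarrow> bool" where
  "topological_group G T \<longleftrightarrow> group G \<and> topspace T = carrier G \<and>
     continuous_map (prod_topology T T) T (\<lambda>(g, h). g \<otimes>\<^bsub>G\<^esub> h) \<and>
     continuous_map T T (\<lambda>g. inv\<^bsub>G\<^esub> g)"

definition continuous_right_action ::
  "'x topology \<Rightarrow> ('g, 'b) monoid_scheme \<Rightarrow> 'g topology \<Rightarrow> ('x \<Rightarrow> 'g \<Rightarrow> 'x) \<Rightarrow> bool" where
  "continuous_right_action X G T \<alpha> \<longleftrightarrow>
     (\<forall>x\<in>topspace X. \<forall>g\<in>carrier G. \<alpha> x g \<in> topspace X) \<and>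
     (\<forall>x\<in>topspace X. \<alpha> x \<one>\<^bsub>G\<^esub> = x) \<and>
     (\<forall>x\<in>topspace X. \<forall>g\<in>carrier G. \<forall>h\<in>carrier G. \<alpha> (\<alpha> x g) h = \<alpha> x (g \<otimes>\<^bsub>G\<^esub> h)) \<and>
     continuous_map (prod_topology X T) X (\<lambda>(x, g). \<alpha> x g)"

definition quotient_top :: "'a topology \<Rightarrow> ('a \<Rightarrow> 'b) \<Rightarrow> 'b topology" where
  "quotient_top X f = topology (\<lambda>U. U \<subseteq> f ` topspace X \<and> openin X {x \<in> topspace X. f x \<in> U})"

definition nbhd_of :: "'a topology \<Rightarrow> 'a set \<Rightarrow> 'a set \<Rightarrow> bool" where
  "nbhd_of X A V \<longleftrightarrow> V \<subseteq> topspace X \<and> (\<exists>U. openin X U \<and> A \<subseteq> U \<and> U \<subseteq> V)"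

definition transporter :: "('g, 'b) monoid_scheme \<Rightarrow> ('x \<Rightarrow> 'g \<Rightarrow> 'x) \<Rightarrow> 'x set \<Rightarrow> 'x set \<Rightarrow> 'g set" where
  "transporter G \<alpha> A B = {g \<in> carrier G. (\<lambda>b. \<alpha> b g) ` B \<inter> A \<noteq> {}}"

definition relatively_compact :: "'g topology \<Rightarrow> 'g set \<Rightarrow> bool" where
  "relatively_compact T S \<longleftrightarrow> S \<subseteq> topspace T \<and> compactin T (T closure_of S)"

definition perp :: "('g, 'b) monoid_scheme \<Rightarrow> 'g topology \<Rightarrow> ('x \<Rightarrow> 'g \<Rightarrow> 'x) \<Rightarrow> 'x set \<Rightarrow> 'x set \<Rightarrow> bool" where
  "perp G T \<alpha> A B \<longleftrightarrow> relatively_compact T (transporter G \<alpha> A B)"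

definition Bourbaki_proper ::
  "'x topology \<Rightarrow> ('g, 'b) monoid_scheme \<Rightarrow> 'g topology \<Rightarrow> ('x \<Rightarrow> 'g \<Rightarrow> 'x) \<Rightarrow> bool" where
  "Bourbaki_proper X G T \<alpha> \<longleftrightarrow>
     (\<forall>x\<in>topspace X. \<forall>x'\<in>topspace X. \<exists>Vx Vx'.
        nbhd_of X {x} Vx \<and> nbhd_of X {x'} Vx' \<and> perp G T \<alpha> Vx' Vx)"

definition F_proper ::
  "'x topology \<Rightarrow> ('g, 'b) monoid_scheme \<Rightarrow> 'g topology \<Rightarrow> ('x \<Rightarrow> 'g \<Rightarrow> 'x) \<Rightarrow> 'x set \<Rightarrow> bool" where
  "F_proper X G T \<alpha> F \<longleftrightarrow>
     (\<forall>x\<in>topspace X. \<exists>Vx VF.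
        nbhd_of X {x} Vx \<and> nbhd_of X F VF \<and> perp G T \<alpha> VF Vx)"

definition orbit_map :: "('x \<Rightarrow> 'g \<Rightarrow> 'x) \<Rightarrow> 'g set \<Rightarrow> 'x \<Rightarrow> 'x set" where
  "orbit_map \<alpha> H x = (\<lambda>h. \<alpha> x h) ` H"

(* Induced action of G/H on X/H: (xH)(Hg) = {x h h' g} = xgH for H normal. *)
definition induced_action :: "('x \<Rightarrow> 'g \<Rightarrow> 'x) \<Rightarrow> 'x set \<Rightarrow> 'g set \<Rightarrow> 'x set" where
  "induced_action \<alpha> Q C = {\<alpha> x g | x g. x \<in> Q \<and> g \<in> C}"

end

theory Submission
  imports Defs
begin

text \<open>
  Write \<open>\<pi>\<close> for the orbit map. The saturation \<open>\<pi>\<^sup>-\<^sup>1(\<pi> F)\<close> is the set of \<open>x\<close> with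
  \<open>x h \<in> F\<close> for some \<open>h \<in> H\<close>. Near a point \<open>x\<^sub>0\<close>, F-properness confines the relevant \<open>h\<close> to
  the compact set \<open>K = cl \<langle>V\<^sub>F : V\<^sub>x\<^sub>0\<rangle> \<inter> H\<close>, and the set of \<open>x\<close> with \<open>x k \<in> F\<close> for some
  \<open>k \<in> K\<close> is closed because projecting along a compact factor is a closed map; hence \<open>\<pi> F\<close>
  is closed. Since \<open>\<pi>\<close> is open, \<open>\<pi> V\<^sub>x\<close> and \<open>\<pi> V\<^sub>F\<close> are neighbourhoods, and their
  transporter for the induced action lies in the image of \<open>cl \<langle>V\<^sub>F : V\<^sub>x\<rangle>\<close> in \<open>G/H\<close>,
  which is compact and, because \<open>H\<close> is closed, also closed.
\<close>

lemma istopology_quotient_top: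
  "istopology (\<lambda>U. U \<subseteq> f ` topspace X \<and> openin X {x \<in> topspace X. f x \<in> U})"
proof -
  have "{x \<in> topspace X. f x \<in> S \<inter> S'} = {x \<in> topspace X. f x \<in> S} \<inter> {x \<in> topspace X. f x \<in> S'}"
    for S S' by blast
  moreover have "{x \<in> topspace X. f x \<in> \<Union>\<K>} = (\<Union>U\<in>\<K>. {x \<in> topspace X. f x \<in> U})" for \<K>
    by blast
  ultimately show ?thesis
    unfolding istopology_def by (auto intro!: openin_Int openin_Union)
qed

lemma openin_quotient_top:
  "openin (quotient_top X f) U \<longleftrightarrow> U \<subseteq> f ` topspace X \<and> openin X {x \<in> topspace X. f x \<in> U}"
  unfolding quotient_top_def by (simp only: topology_inverse'[OF istopology_quotient_top])

lemma topspace_quotient_top: "topspace (quotient_top X f) = f ` topspace X"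
proof -
  have "{x \<in> topspace X. f x \<in> f ` topspace X} = topspace X"
    by blast
  then have "openin (quotient_top X f) (f ` topspace X)"
    by (simp add: openin_quotient_top)
  then have "f ` topspace X \<subseteq> topspace (quotient_top X f)"
    by (rule openin_subset)
  moreover have "topspace (quotient_top X f) \<subseteq> f ` topspace X"
    using openin_topspace[of "quotient_top X f"] unfolding openin_quotient_top by blast
  ultimately show ?thesis
    by blast
qed

lemma closedin_quotient_top:
  "closedin (quotient_top X f) C \<longleftrightarrow> C \<subseteq> f ` topspace X \<and> closedin X {x \<in> topspace X. f x \<in> C}"
proof -
  have "{x \<in> topspace X. f x \<in> f ` topspace X - C} = topspace X - {x \<in> topspace X. f x \<in> C}"
    by auto
  then show ?thesis
    unfolding closedin_def topspace_quotient_top openin_quotient_top by auto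
qed

lemma continuous_map_quotient_top: "continuous_map X (quotient_top X f) f"
  unfolding continuous_map_def by (auto simp: topspace_quotient_top openin_quotient_top)

lemma relatively_compact_subset:
  assumes "S \<subseteq> topspace T" "S \<subseteq> D" "closedin T D" "compactin T D"
  shows "relatively_compact T S"
  unfolding relatively_compact_def
  using assms closure_of_minimal closed_compactin closedin_closure_of by meson

lemma nbhd_ofI: "openin X U \<Longrightarrow> A \<subseteq> U \<Longrightarrow> U \<subseteq> V \<Longrightarrow> V \<subseteq> topspace X \<Longrightarrow> nbhd_of X A V"
  unfolding nbhd_of_def by blast

lemma closedin_exists_in_compact:
  assumes f: "continuous_map (prod_topology X T) Y (\<lambda>(x, k). f x k)"
    and A: "closedin Y A" and K: "compactin T K"
  shows "closedin X {x \<in> topspace X. \<exists>k\<in>K. f x k \<in> A}"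
proof -
  let ?P = "prod_topology X (subtopology T K)"
  have "continuous_map ?P Y (\<lambda>(x, k). f x k)"
    using continuous_map_from_subtopology[OF f, of "topspace X \<times> K"]
    by (simp add: subtopology_Times)
  then have "closedin ?P {p \<in> topspace ?P. (\<lambda>(x, k). f x k) p \<in> A}"
    using A by (rule closedin_continuous_map_preimage)
  then have "closedin X (fst ` {p \<in> topspace ?P. (\<lambda>(x, k). f x k) p \<in> A})"
    using closed_map_fst[OF compact_space_subtopology[OF K]] unfolding closed_map_def by blast
  moreover have "fst ` {p \<in> topspace ?P. (\<lambda>(x, k). f x k) p \<in> A} = {x \<in> topspace X. \<exists>k\<in>K. f x k \<in> A}"
    using compactin_subset_topspace[OF K] by (force simp: topspace_subtopology)
  ultimately show ?thesis by simp
qed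

lemma (in group) r_coset_eq_iff:
  assumes "subgroup H G" "g \<in> carrier G" "c \<in> carrier G"
  shows "H #> g = H #> c \<longleftrightarrow> g \<otimes> inv c \<in> H"
  using assms rcos_self repr_independence subgroup.rcos_module[OF _ is_group] by metis

lemma (in group) closedin_rcoset_image_compact:
  assumes G: "topological_group G T" and H: "subgroup H G" "closedin T H" and C: "compactin T C"
  shows "closedin (quotient_top T (\<lambda>g. H #> g)) ((\<lambda>g. H #> g) ` C)"
proof -
  have TG: "topspace T = carrier G"
    and mult: "continuous_map (prod_topology T T) T (\<lambda>(g, h). g \<otimes> h)"
    and inv: "continuous_map T T (\<lambda>g. inv g)"
    using G unfolding topological_group_def by auto
  have CG: "C \<subseteq> carrier G"
    using compactin_subset_topspace[OF C] TG by simp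
  have "{g \<in> topspace T. H #> g \<in> (\<lambda>g. H #> g) ` C} = {g \<in> topspace T. \<exists>k\<in>(\<lambda>g. inv g) ` C. g \<otimes> k \<in> H}"
    using r_coset_eq_iff[OF H(1)] CG TG by auto
  moreover have "closedin T {g \<in> topspace T. \<exists>k\<in>(\<lambda>g. inv g) ` C. g \<otimes> k \<in> H}"
    using closedin_exists_in_compact[OF mult H(2) image_compactin[OF C inv]] .
  ultimately show ?thesis
    unfolding closedin_quotient_top using CG TG by auto
qed

lemma continuous_right_actionD:
  assumes "continuous_right_action X G T \<alpha>"
  shows action_in_topspace: "\<And>x g. x \<in> topspace X \<Longrightarrow> g \<in> carrier G \<Longrightarrow> \<alpha> x g \<in> topspace X"
    and action_one: "\<And>x. x \<in> topspace X \<Longrightarrow> \<alpha> x \<one>\<^bsub>G\<^esub> = x"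
    and action_mult: "\<And>x g h. x \<in> topspace X \<Longrightarrow> g \<in> carrier G \<Longrightarrow> h \<in> carrier G \<Longrightarrow>
      \<alpha> (\<alpha> x g) h = \<alpha> x (g \<otimes>\<^bsub>G\<^esub> h)"
    and continuous_map_action: "continuous_map (prod_topology X T) X (\<lambda>(x, g). \<alpha> x g)"
  using assms unfolding continuous_right_action_def by auto

lemma continuous_map_action_fixed:
  assumes "continuous_right_action X G T \<alpha>" "g \<in> topspace T"
  shows "continuous_map X X (\<lambda>x. \<alpha> x g)"
proof -
  have "continuous_map X (prod_topology X T) (\<lambda>x. (x, g))"
    using assms(2) by (intro continuous_map_pairedI) auto
  from continuous_map_compose[OF this continuous_map_action[OF assms(1)]] show ?thesis
    by (simp add: o_def)
qed

lemma (in group) orbit_map_eq_iff: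
  assumes H: "subgroup H G" and act: "continuous_right_action X G T \<alpha>"
    and x: "x \<in> topspace X" and y: "y \<in> topspace X"
  shows "orbit_map \<alpha> H x = orbit_map \<alpha> H y \<longleftrightarrow> (\<exists>h\<in>H. \<alpha> x h = y)"
proof
  assume "orbit_map \<alpha> H x = orbit_map \<alpha> H y"
  moreover have "y \<in> orbit_map \<alpha> H y"
    unfolding orbit_map_def using action_one[OF act y] subgroup.one_closed[OF H] by (metis image_eqI)
  ultimately show "\<exists>h\<in>H. \<alpha> x h = y"
    unfolding orbit_map_def by force
next
  assume "\<exists>h\<in>H. \<alpha> x h = y"
  then obtain h where h: "h \<in> H" and y: "y = \<alpha> x h" by blast
  have "orbit_map \<alpha> H y = (\<lambda>k. \<alpha> x (h \<otimes> k)) ` H"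
    unfolding y orbit_map_def using h action_mult[OF act x] subgroup.mem_carrier[OF H]
    by (intro image_cong refl) simp
  also have "\<dots> = (\<lambda>k. \<alpha> x k) ` (h <# H)"
    unfolding l_coset_def by blast
  also have "h <# H = H"
    using h H by (simp add: coset_join3 subgroup.mem_carrier)
  finally show "orbit_map \<alpha> H x = orbit_map \<alpha> H y"
    by (simp add: orbit_map_def)
qed

lemma (in group) orbit_map_preimage_image:
  assumes H: "subgroup H G" and act: "continuous_right_action X G T \<alpha>"
    and A: "A \<subseteq> topspace X"
  shows "{x \<in> topspace X. orbit_map \<alpha> H x \<in> orbit_map \<alpha> H ` A} = {x \<in> topspace X. \<exists>h\<in>H. \<alpha> x h \<in> A}"
proof -
  have "orbit_map \<alpha> H x \<in> orbit_map \<alpha> H ` A \<longleftrightarrow> (\<exists>h\<in>H. \<alpha> x h \<in> A)"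
    if x: "x \<in> topspace X" for x
  proof
    assume "orbit_map \<alpha> H x \<in> orbit_map \<alpha> H ` A"
    then obtain a where "a \<in> A" "orbit_map \<alpha> H x = orbit_map \<alpha> H a"
      by blast
    then show "\<exists>h\<in>H. \<alpha> x h \<in> A"
      using orbit_map_eq_iff[OF H act x, of a] A by blast
  next
    assume "\<exists>h\<in>H. \<alpha> x h \<in> A"
    then obtain h where "h \<in> H" "\<alpha> x h \<in> A"
      by blast
    then show "orbit_map \<alpha> H x \<in> orbit_map \<alpha> H ` A"
      using orbit_map_eq_iff[OF H act x, of "\<alpha> x h"] A by blast
  qed
  then show ?thesis
    by blast
qed

lemma (in group) openin_orbit_map_image:
  assumes "subgroup H G" and act: "continuous_right_action X G T \<alpha>"
    and HT: "H \<subseteq> topspace T" and U: "openin X U"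
  shows "openin (quotient_top X (orbit_map \<alpha> H)) (orbit_map \<alpha> H ` U)"
proof -
  have preimage: "{x \<in> topspace X. orbit_map \<alpha> H x \<in> orbit_map \<alpha> H ` U}
      = (\<Union>h\<in>H. {x \<in> topspace X. \<alpha> x h \<in> U})"
    using orbit_map_preimage_image[OF assms(1,2) openin_subset[OF U]] by auto
  have "openin X (\<Union>h\<in>H. {x \<in> topspace X. \<alpha> x h \<in> U})"
  proof (rule openin_Union, clarify)
    fix h assume "h \<in> H"
    show "openin X {x \<in> topspace X. \<alpha> x h \<in> U}"
      using openin_continuous_map_preimage[OF continuous_map_action_fixed[OF act] U] HT \<open>h \<in> H\<close>
      by blast
  qed
  then show ?thesis
    unfolding openin_quotient_top preimage by (intro conjI image_mono openin_subset[OF U])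
qed

lemma (in group) nbhd_of_orbit_map_image:
  assumes "subgroup H G" "continuous_right_action X G T \<alpha>"
    and "H \<subseteq> topspace T" and "nbhd_of X A V"
  shows "nbhd_of (quotient_top X (orbit_map \<alpha> H)) (orbit_map \<alpha> H ` A) (orbit_map \<alpha> H ` V)"
proof -
  obtain W where V: "V \<subseteq> topspace X" and W: "openin X W" "A \<subseteq> W" "W \<subseteq> V"
    using assms(4) unfolding nbhd_of_def by blast
  show ?thesis
  proof (rule nbhd_ofI)
    show "openin (quotient_top X (orbit_map \<alpha> H)) (orbit_map \<alpha> H ` W)"
      by (rule openin_orbit_map_image[OF assms(1-3) W(1)])
    show "orbit_map \<alpha> H ` V \<subseteq> topspace (quotient_top X (orbit_map \<alpha> H))"
      unfolding topspace_quotient_top using V by (rule image_mono)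
  qed (use W in \<open>simp_all add: image_mono\<close>)
qed

lemma (in group) induced_action_orbit_map_eq_image:
  assumes act: "continuous_right_action X G T \<alpha>" and v: "v \<in> topspace X"
    and H: "H \<subseteq> carrier G" and C: "C \<subseteq> carrier G"
  shows "induced_action \<alpha> (orbit_map \<alpha> H v) C = (\<lambda>k. \<alpha> v k) ` (H <#> C)"
proof
  show "induced_action \<alpha> (orbit_map \<alpha> H v) C \<subseteq> (\<lambda>k. \<alpha> v k) ` (H <#> C)"
  proof
    fix z assume "z \<in> induced_action \<alpha> (orbit_map \<alpha> H v) C"
    then obtain h c where hc: "h \<in> H" "c \<in> C" and z: "z = \<alpha> (\<alpha> v h) c"
      unfolding induced_action_def orbit_map_def by blast
    have "z = \<alpha> v (h \<otimes> c)"
      using z action_mult[OF act v subsetD[OF H hc(1)] subsetD[OF C hc(2)]] by simp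
    moreover have "h \<otimes> c \<in> H <#> C"
      unfolding set_mult_def using hc by blast
    ultimately show "z \<in> (\<lambda>k. \<alpha> v k) ` (H <#> C)"
      by (rule image_eqI)
  qed
  show "(\<lambda>k. \<alpha> v k) ` (H <#> C) \<subseteq> induced_action \<alpha> (orbit_map \<alpha> H v) C"
  proof
    fix z assume "z \<in> (\<lambda>k. \<alpha> v k) ` (H <#> C)"
    then obtain h c where hc: "h \<in> H" "c \<in> C" and z: "z = \<alpha> v (h \<otimes> c)"
      by (auto simp: set_mult_def)
    then have "z = \<alpha> (\<alpha> v h) c"
      using action_mult[OF act v subsetD[OF H hc(1)] subsetD[OF C hc(2)]] by simp
    then show "z \<in> induced_action \<alpha> (orbit_map \<alpha> H v) C"
      unfolding induced_action_def orbit_map_def using hc by blast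
  qed
qed

lemma (in normal) induced_action_orbit_map:
  assumes act: "continuous_right_action X G T \<alpha>"
    and v: "v \<in> topspace X" and g: "g \<in> carrier G"
  shows "induced_action \<alpha> (orbit_map \<alpha> H v) (H #> g) = orbit_map \<alpha> H (\<alpha> v g)"
proof -
  have "H <#> (H #> g) = H #> g"
    by (simp add: setmult_rcos_assoc[OF subset subset g] subgroup_mult_id[OF subgroup_axioms])
  also have "\<dots> = g <# H"
    using coset_eq g by blast
  finally have HHg: "H <#> (H #> g) = g <# H" .
  have "induced_action \<alpha> (orbit_map \<alpha> H v) (H #> g) = (\<lambda>k. \<alpha> v k) ` (g <# H)"
    using induced_action_orbit_map_eq_image[OF act v subset r_coset_subset_G[OF subset g]]
    unfolding HHg .
  also have "\<dots> = orbit_map \<alpha> H (\<alpha> v g)"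
    unfolding orbit_map_def l_coset_def using action_mult[OF act v g] subset by auto
  finally show ?thesis .
qed

lemma (in normal) transporter_induced_action_subset:
  assumes act: "continuous_right_action X G T \<alpha>"
    and A: "A \<subseteq> topspace X" and B: "B \<subseteq> topspace X"
  shows "transporter (G Mod H) (induced_action \<alpha>) (orbit_map \<alpha> H ` A) (orbit_map \<alpha> H ` B)
    \<subseteq> (\<lambda>g. H #> g) ` transporter G \<alpha> A B"
proof
  fix C assume C: "C \<in> transporter (G Mod H) (induced_action \<alpha>) (orbit_map \<alpha> H ` A) (orbit_map \<alpha> H ` B)"
  then have "C \<in> (\<lambda>g. H #> g) ` carrier G"
    by (simp add: transporter_def carrier_FactGroup)
  then obtain g where g: "g \<in> carrier G" and Cg: "C = H #> g"
    by blast
  from C obtain v w where v: "v \<in> B" and w: "w \<in> A"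
    and vw: "induced_action \<alpha> (orbit_map \<alpha> H v) C = orbit_map \<alpha> H w"
    unfolding transporter_def by blast
  have vX: "v \<in> topspace X" and wX: "w \<in> topspace X"
    using v w A B by auto
  have "orbit_map \<alpha> H (\<alpha> v g) = orbit_map \<alpha> H w"
    using induced_action_orbit_map[OF act vX g] vw Cg by simp
  then obtain h where h: "h \<in> H" and "\<alpha> (\<alpha> v g) h = w"
    using orbit_map_eq_iff[OF subgroup_axioms act action_in_topspace[OF act vX g] wX] by blast
  then have "\<alpha> v (g \<otimes> h) = w"
    using action_mult[OF act vX g mem_carrier[OF h]] by simp
  then have "g \<otimes> h \<in> transporter G \<alpha> A B"
    unfolding transporter_def using g mem_carrier[OF h] v w by blast
  moreover have "g \<otimes> h \<in> H #> g"
    using coset_eq g h unfolding l_coset_def by blast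
  then have "C = H #> (g \<otimes> h)"
    unfolding Cg by (rule repr_independence[OF _ g subgroup_axioms])
  ultimately show "C \<in> (\<lambda>g. H #> g) ` transporter G \<alpha> A B"
    by (rule rev_image_eqI)
qed

lemma closedin_saturation_F_proper:
  assumes act: "continuous_right_action X G T \<alpha>"
    and H: "closedin T H" "H \<subseteq> carrier G"
    and F: "closedin X F" and proper: "F_proper X G T \<alpha> F"
  shows "closedin X {x \<in> topspace X. \<exists>h\<in>H. \<alpha> x h \<in> F}" (is "closedin X ?M")
proof -
  have "\<exists>W. openin X W \<and> x \<in> W \<and> W \<subseteq> topspace X - ?M" if x: "x \<in> topspace X - ?M" for x
  proof -
    obtain Vx VF where Vx: "nbhd_of X {x} Vx" and VF: "nbhd_of X F VF"
      and perp: "perp G T \<alpha> VF Vx"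
      using proper x unfolding F_proper_def by blast
    obtain U where U: "openin X U" "x \<in> U" "U \<subseteq> Vx"
      using Vx unfolding nbhd_of_def by blast
    define K where "K = T closure_of transporter G \<alpha> VF Vx \<inter> H"
    have "compactin T K"
      unfolding K_def using perp H(1) closed_compactin
      by (metis closedin_Int closedin_closure_of inf_le1 perp_def relatively_compact_def)
    then have B: "closedin X {z \<in> topspace X. \<exists>k\<in>K. \<alpha> z k \<in> F}" (is "closedin X ?B")
      using closedin_exists_in_compact[OF continuous_map_action[OF act] F] by blast
    have MB: "U \<inter> ?M \<subseteq> ?B"
    proof
      fix z assume "z \<in> U \<inter> ?M"
      then obtain h where z: "z \<in> topspace X" "z \<in> Vx" and h: "h \<in> H" "\<alpha> z h \<in> F"
        using U by blast
      have "h \<in> transporter G \<alpha> VF Vx"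
        unfolding transporter_def using z h H(2) VF unfolding nbhd_of_def by blast
      then have "h \<in> K"
        unfolding K_def using perp h closure_of_subset
        unfolding perp_def relatively_compact_def by blast
      then show "z \<in> ?B" using z h by blast
    qed
    have BM: "?B \<subseteq> ?M"
      unfolding K_def by blast
    show ?thesis
    proof (intro exI conjI)
      show "openin X (U - ?B)"
        using U(1) B by (rule openin_diff)
      show "x \<in> U - ?B"
        using x U(2) BM by blast
      show "U - ?B \<subseteq> topspace X - ?M"
        using openin_subset[OF U(1)] MB by blast
    qed
  qed
  then show ?thesis
    unfolding closedin_def by (subst openin_subopen) auto
qed

lemma (in normal) perp_orbit_map_image:
  assumes G: "topological_group G T" and H: "closedin T H"
    and act: "continuous_right_action X G T \<alpha>"
    and A: "A \<subseteq> topspace X" and B: "B \<subseteq> topspace X" and perp: "perp G T \<alpha> A B"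
  shows "perp (G Mod H) (quotient_top T (\<lambda>g. H #> g)) (induced_action \<alpha>)
    (orbit_map \<alpha> H ` A) (orbit_map \<alpha> H ` B)"
proof -
  let ?q = "\<lambda>g. H #> g"
  let ?S = "transporter G \<alpha> A B"
  have TG: "topspace T = carrier G"
    using G unfolding topological_group_def by blast
  have C: "?S \<subseteq> topspace T" "compactin T (T closure_of ?S)"
    using perp unfolding perp_def relatively_compact_def by auto
  have "transporter (G Mod H) (induced_action \<alpha>) (orbit_map \<alpha> H ` A) (orbit_map \<alpha> H ` B) \<subseteq> ?q ` ?S"
    by (rule transporter_induced_action_subset[OF act A B])
  also have "\<dots> \<subseteq> ?q ` (T closure_of ?S)"
    using closure_of_subset[OF C(1)] by (rule image_mono)
  finally show ?thesis
    unfolding perp_def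
  proof (rule relatively_compact_subset[rotated])
    show "transporter (G Mod H) (induced_action \<alpha>) (orbit_map \<alpha> H ` A) (orbit_map \<alpha> H ` B)
        \<subseteq> topspace (quotient_top T ?q)"
      using TG by (auto simp: transporter_def carrier_FactGroup topspace_quotient_top)
    show "closedin (quotient_top T ?q) (?q ` (T closure_of ?S))"
      by (rule closedin_rcoset_image_compact[OF G subgroup_axioms H C(2)])
    show "compactin (quotient_top T ?q) (?q ` (T closure_of ?S))"
      by (rule image_compactin[OF C(2) continuous_map_quotient_top])
  qed
qed

lemma (in normal) F_proper_induced_action:
  assumes G: "topological_group G T" and H: "closedin T H"
    and act: "continuous_right_action X G T \<alpha>" and proper: "F_proper X G T \<alpha> F"
  shows "F_proper (quotient_top X (orbit_map \<alpha> H)) (G Mod H) (quotient_top T (\<lambda>g. H #> g))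
    (induced_action \<alpha>) (orbit_map \<alpha> H ` F)"
  unfolding F_proper_def
proof
  have HT: "H \<subseteq> topspace T"
    by (rule closedin_subset[OF H])
  fix p assume "p \<in> topspace (quotient_top X (orbit_map \<alpha> H))"
  then obtain x where x: "x \<in> topspace X" "p = orbit_map \<alpha> H x"
    by (auto simp: topspace_quotient_top)
  then obtain Vx VF where Vx: "nbhd_of X {x} Vx" and VF: "nbhd_of X F VF"
    and perp: "perp G T \<alpha> VF Vx"
    using proper unfolding F_proper_def by blast
  show "\<exists>Vp VF'. nbhd_of (quotient_top X (orbit_map \<alpha> H)) {p} Vp
      \<and> nbhd_of (quotient_top X (orbit_map \<alpha> H)) (orbit_map \<alpha> H ` F) VF'
      \<and> perp (G Mod H) (quotient_top T (\<lambda>g. H #> g)) (induced_action \<alpha>) VF' Vp"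
  proof (intro exI conjI)
    show "nbhd_of (quotient_top X (orbit_map \<alpha> H)) {p} (orbit_map \<alpha> H ` Vx)"
      using nbhd_of_orbit_map_image[OF subgroup_axioms act HT Vx] x(2) by simp
    show "nbhd_of (quotient_top X (orbit_map \<alpha> H)) (orbit_map \<alpha> H ` F) (orbit_map \<alpha> H ` VF)"
      by (rule nbhd_of_orbit_map_image[OF subgroup_axioms act HT VF])
    show "perp (G Mod H) (quotient_top T (\<lambda>g. H #> g)) (induced_action \<alpha>)
        (orbit_map \<alpha> H ` VF) (orbit_map \<alpha> H ` Vx)"
      using Vx VF unfolding nbhd_of_def by (intro perp_orbit_map_image[OF G H act _ _ perp]) auto
  qed
qed

theorem lemma2p10:
  fixes G :: "('g, 'b) monoid_scheme" and T :: "'g topology"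
    and X :: "'x topology" and \<alpha> :: "'x \<Rightarrow> 'g \<Rightarrow> 'x"
    and F :: "'x set" and H :: "'g set"
  assumes "topological_group G T"
    and "locally_compact_space T" and "Hausdorff_space T"
    and "Hausdorff_space X"
    and "continuous_right_action X G T \<alpha>"
    and "Bourbaki_proper X G T \<alpha>"
    and "closedin X F"
    and "normal H G" and "closedin T H"
    and "F_proper X G T \<alpha> F"
  shows "closedin (quotient_top X (orbit_map \<alpha> H)) (orbit_map \<alpha> H ` F)
    \<and> F_proper (quotient_top X (orbit_map \<alpha> H)) (G Mod H)
        (quotient_top T (\<lambda>g. H #>\<^bsub>G\<^esub> g)) (induced_action \<alpha>) (orbit_map \<alpha> H ` F)"
proof
  have G: "group G"
    using assms(1) unfolding topological_group_def by blast
  have H: "subgroup H G"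
    using assms(8) by (rule normal_imp_subgroup)
  have "closedin X {x \<in> topspace X. \<exists>h\<in>H. \<alpha> x h \<in> F}"
    using closedin_saturation_F_proper[OF assms(5,9) subgroup.subset[OF H] assms(7,10)] .
  then show "closedin (quotient_top X (orbit_map \<alpha> H)) (orbit_map \<alpha> H ` F)"
    unfolding closedin_quotient_top
    using group.orbit_map_preimage_image[OF G H assms(5) closedin_subset[OF assms(7)]]
      closedin_subset[OF assms(7)] by auto
  show "F_proper (quotient_top X (orbit_map \<alpha> H)) (G Mod H)
      (quotient_top T (\<lambda>g. H #>\<^bsub>G\<^esub> g)) (induced_action \<alpha>) (orbit_map \<alpha> H ` F)"
    using normal.F_proper_induced_action[OF assms(8,1,9,5,10)] .
qed

end
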